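(* Let $n>2k$, let $q\ge nk$ be a prime power and $\gamma$ a primitive element of $\mathbb F_q$. Let $\mathcal C\subseteq\mathbb F_q^{n-k-1}$ be the code $\{\boldsymbol c: \sum_{p=1}^{n-k-1}\gamma^{(p-1)u}c_p=0\ \text{for } u=0,\dots,k-2\}$ (so $|\mathcal C|=q^{n-2k}$), and enumerate its codewords as $\boldsymbol c_1,\dots,\boldsymbol c_{q^{n-2k}}$. For each $i$ let $S_i\subseteq\mathbb F_q^n$ be the span of $\boldsymbol v_{i,1},\dots,\boldsymbol v_{i,k}$, where $\boldsymbol v_{i,t}=(\boldsymbol e_t,\ \Gamma_t(\boldsymbol c_i),\ h_t(\boldsymbol c_i))$ with $\boldsymbol e_t\in\mathbb F_q^k$ the $t$-th unit vector, $\Gamma_t(\boldsymbol x)=(\gamma^{t-1}x_1,\gamma^{2(t-1)}x_2,\dots,\gamma^{(n-k-1)(t-1)}x_{n-k-1})$, and $h_t(\boldsymbol x)=\sum_{p=1}^{n-k-1}x_p^{(t-1)(n-k-1)+p+1}$. Then $\mathcal F_{n,k}=\{S_1,\dots,S_{q^{n-2k}}\}$ consists of $k$-dimensional subspaces with pairwise trivial intersection. Moreover, $\mathcal F_{n,1}$ is an $[n,1,n-1]_q$-AAD family and $\mathcal F_{n,2}$ is an $[n,2,1+2(n-2)(2n-6)]_q$-AAD family.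
   Context: An $[n,k,L]_q$-AAD family is a family $\mathcal F$ of $k$-dimensional subspaces of $\mathbb F_q^n$ ($n>2k$) with pairwise trivial intersections such that for every $S\in\mathcal F$ and $\boldsymbol u\in\mathbb F_q^n\setminus S$, the affine space $\boldsymbol u+S$ intersects at most $L$ members of $\mathcal F$. For $k=1$ the code $\mathcal C$ is all of $\mathbb F_q^{n-2}$. *)

theory Defs
  imports Main
begin

text \<open>Vectors of F_q^n are modelled as functions nat => 'a that vanish outside
  the index range {0..<n} (coordinate j corresponds to the paper's coordinate j+1).\<close>

definition vecs :: "nat \<Rightarrow> (nat \<Rightarrow> 'a::zero) set" where
  "vecs n = {v. \<forall>j\<ge>n. v j = 0}"

definition zvec :: "nat \<Rightarrow> 'a::zero" where
  "zvec = (\<lambda>_. 0)"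

definition lspan :: "(nat \<Rightarrow> 'a::field) list \<Rightarrow> (nat \<Rightarrow> 'a) set" where
  "lspan vs = {(\<lambda>j. \<Sum>t<length vs. a t * (vs ! t) j) | a. True}"

definition lin_indep :: "(nat \<Rightarrow> 'a::field) list \<Rightarrow> bool" where
  "lin_indep vs \<longleftrightarrow> (\<forall>a. (\<lambda>j. \<Sum>t<length vs. a t * (vs ! t) j) = zvec
                         \<longrightarrow> (\<forall>t<length vs. a t = 0))"

definition kdim_subspace :: "nat \<Rightarrow> nat \<Rightarrow> (nat \<Rightarrow> 'a::field) set \<Rightarrow> bool" where
  "kdim_subspace n k S \<longleftrightarrow>
     (\<exists>B. length B = k \<and> set B \<subseteq> vecs n \<and> lin_indep B \<and> lspan B = S)"

definition affine_translate :: "(nat \<Rightarrow> 'a::plus) \<Rightarrow> (nat \<Rightarrow> 'a) set \<Rightarrow> (nat \<Rightarrow> 'a) set" where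
  "affine_translate u S = {(\<lambda>j. u j + s j) | s. s \<in> S}"

text \<open>[n,k,L]_q-AAD family (q = CARD('a)).\<close>
definition AAD :: "nat \<Rightarrow> nat \<Rightarrow> nat \<Rightarrow> (nat \<Rightarrow> 'a::field) set set \<Rightarrow> bool" where
  "AAD n k L F \<longleftrightarrow>
     n > 2 * k \<and>
     (\<forall>S\<in>F. kdim_subspace n k S) \<and>
     (\<forall>S\<in>F. \<forall>T\<in>F. S \<noteq> T \<longrightarrow> S \<inter> T = {zvec}) \<and>
     (\<forall>S\<in>F. \<forall>u\<in>vecs n - S.
        card {T\<in>F. affine_translate u S \<inter> T \<noteq> {}} \<le> L)"

definition primitive_element :: "'a::field \<Rightarrow> bool" where
  "primitive_element g \<longleftrightarrow> g \<noteq> 0 \<and> (\<forall>x. x \<noteq> 0 \<longrightarrow> (\<exists>i::nat. g ^ i = x))"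

text \<open>The code C in F_q^{n-k-1}: indices p = 0..<n-k-1 (paper's p+1),
  constraints u = 0..k-2.\<close>
definition code :: "nat \<Rightarrow> nat \<Rightarrow> 'a::field \<Rightarrow> (nat \<Rightarrow> 'a) set" where
  "code n k g = {c \<in> vecs (n - k - 1).
      \<forall>u. u + 2 \<le> k \<longrightarrow> (\<Sum>p<n - k - 1. g ^ (p * u) * c p) = 0}"

text \<open>The vector v_{c,t} for t = 0..<k (paper's t+1):
  (e_t, Gamma_t(c), h_t(c)) in F^n, with m = n-k-1.\<close>
definition vgen :: "nat \<Rightarrow> nat \<Rightarrow> 'a::field \<Rightarrow> (nat \<Rightarrow> 'a) \<Rightarrow> nat \<Rightarrow> (nat \<Rightarrow> 'a)" where
  "vgen n k g c t = (\<lambda>j.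
     if j < k then (if j = t then 1 else 0)
     else if j < n - 1 then g ^ ((j - k + 1) * t) * c (j - k)
     else if j = n - 1 then (\<Sum>p<n - k - 1. c p ^ (t * (n - k - 1) + p + 2))
     else 0)"

definition Ssub :: "nat \<Rightarrow> nat \<Rightarrow> 'a::field \<Rightarrow> (nat \<Rightarrow> 'a) \<Rightarrow> (nat \<Rightarrow> 'a) set" where
  "Ssub n k g c = lspan (map (vgen n k g c) [0..<k])"

definition Ffam :: "nat \<Rightarrow> nat \<Rightarrow> 'a::field \<Rightarrow> (nat \<Rightarrow> 'a) set set" where
  "Ffam n k g = Ssub n k g ` code n k g"

end

theory Submission
  imports Defs "HOL-Computational_Algebra.Polynomial"
begin

text \<open>Every vector of \<open>S\<^sub>c\<close> is determined by its first \<open>k\<close> coordinates \<open>a\<close>, and its middle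
  block is \<open>P\<^sub>a(\<gamma>\<^sup>p) c\<^sub>p\<close> with \<open>P\<^sub>a\<close> the polynomial of degree below \<open>k\<close> with coefficients \<open>a\<close>.
  If \<open>S\<^sub>c\<close> and \<open>S\<^sub>c\<^sub>'\<close> shared a nonzero vector, \<open>c - c'\<close> would be supported on the roots of
  \<open>P\<^sub>a\<close>, i.e. on fewer than \<open>k\<close> positions, whereas the Vandermonde parity checks of the code
  force at least \<open>k\<close> nonzero entries.

  If \<open>u + S\<^sub>c\<close> meets \<open>S\<^sub>c\<^sub>'\<close>, the coefficient vector \<open>b\<close> of the common point determines
  \<open>c' - c\<close> up to a scalar \<open>t\<close>: for \<open>k = 1\<close> it is \<open>t\<close> times a fixed vector \<open>w\<close>; for \<open>k = 2\<close>
  the middle block reads \<open>(r + \<gamma>\<^sup>p\<^sup>+\<^sup>1) d\<^sub>p = t w\<^sub>p\<close>, whose solutions with \<open>\<Sum> d\<^sub>p = 0\<close> are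
  \<open>t\<close> times a partial-fraction vector, for at most \<open>2(n - 3)\<close> values of \<open>r\<close>. In either case
  the last coordinate makes \<open>t\<close> a root of a nonzero polynomial, whose degree is bounded by the
  largest exponent occurring in \<open>h\<close>.\<close>

lemma primitive_element_inj_on_power:
  fixes g :: "'a::{finite,field}"
  assumes "primitive_element g"
  shows "inj_on (\<lambda>i. g ^ i) {..<card (UNIV :: 'a set) - 1}"
proof (rule linorder_inj_onI')
  fix i j assume "i \<in> {..<card (UNIV :: 'a set) - 1}" "j \<in> {..<card (UNIV :: 'a set) - 1}" "i < j"
  then have ij: "i < j" "j < card (UNIV :: 'a set) - 1" by auto
  show "g ^ i \<noteq> g ^ j"
  proof
    assume eq: "g ^ i = g ^ j"
    define e where "e = j - i"
    have "g \<noteq> 0" using assms by (simp add: primitive_element_def)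
    moreover have "g ^ j = g ^ i * g ^ e" using ij by (simp add: e_def flip: power_add)
    ultimately have order: "g ^ e = 1" using eq by simp
    have cover: "UNIV - {0} \<subseteq> (\<lambda>l. g ^ l) ` {..<e}"
    proof
      fix x :: 'a assume "x \<in> UNIV - {0}"
      then obtain l where "g ^ l = x" using assms by (auto simp: primitive_element_def)
      also have "g ^ l = (g ^ e) ^ (l div e) * g ^ (l mod e)"
        by (simp flip: power_mult power_add)
      finally have "x = g ^ (l mod e)" using order by simp
      moreover have "l mod e < e" using ij by (simp add: e_def)
      ultimately show "x \<in> (\<lambda>l. g ^ l) ` {..<e}" by blast
    qed
    then have "card (UNIV - {0::'a}) \<le> e"
      using card_mono[OF _ cover] card_image_le[of "{..<e}" "\<lambda>l. g ^ l"] by simp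
    then show False using ij by (simp add: card_Diff_singleton e_def)
  qed
qed

lemma inj_on_shift_lessThan:
  fixes f :: "nat \<Rightarrow> 'a"
  assumes "inj_on f {..<m + 1}"
  shows "inj_on (\<lambda>p. f (p + 1)) {..<m}"
  using assms by (auto simp: inj_on_def)

lemma card_le_if_subset_Un_UN:
  assumes "S \<subseteq> A \<union> (\<Union>r\<in>R. B r)" "finite A" "finite R" "\<And>r. r \<in> R \<Longrightarrow> finite (B r)"
    and "card A \<le> a" "card R \<le> \<rho>" "\<And>r. r \<in> R \<Longrightarrow> card (B r) \<le> \<beta>"
  shows "card S \<le> a + \<rho> * \<beta>"
proof -
  have "card S \<le> card (A \<union> (\<Union>r\<in>R. B r))" using assms(1-4) by (intro card_mono) auto
  also have "\<dots> \<le> card A + (\<Sum>r\<in>R. card (B r))"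
    using assms(3) by (intro order_trans[OF card_Un_le] add_left_mono card_UN_le)
  also have "\<dots> \<le> a + card R * \<beta>" using assms(5) sum_mono[OF assms(7)] by (intro add_mono) auto
  also have "\<dots> \<le> a + \<rho> * \<beta>" using assms(6) by simp
  finally show ?thesis .
qed

section \<open>Counting roots\<close>

lemma card_nonzero_le_degree:
  fixes P :: "'a::idom poly"
  assumes "P \<noteq> 0" "inj_on x A" "\<And>p. p \<in> A \<Longrightarrow> poly P (x p) * d p = 0"
  shows "card {p\<in>A. d p \<noteq> 0} \<le> degree P"
proof -
  have "inj_on x {p\<in>A. d p \<noteq> 0}" using assms(2) by (rule inj_on_subset) auto
  then have "card {p\<in>A. d p \<noteq> 0} = card (x ` {p\<in>A. d p \<noteq> 0})" by (simp add: card_image)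
  also have "\<dots> \<le> card {y. poly P y = 0}"
    using assms(3) by (intro card_mono[OF poly_roots_finite[OF assms(1)]]) auto
  also have "\<dots> \<le> degree P" by (rule card_poly_roots_bound[OF assms(1)])
  finally show ?thesis .
qed

lemma sum_poly_mult_eq_sum_coeff:
  fixes L :: "'a::comm_ring_1 poly"
  shows "(\<Sum>p<m. poly L (x p) * d p) = (\<Sum>i\<le>degree L. coeff L i * (\<Sum>p<m. x p ^ i * d p))"
proof -
  have "(\<Sum>p<m. poly L (x p) * d p) = (\<Sum>p<m. \<Sum>i\<le>degree L. coeff L i * (x p ^ i * d p))"
    by (simp add: poly_altdef sum_distrib_right mult.assoc)
  also have "\<dots> = (\<Sum>i\<le>degree L. coeff L i * (\<Sum>p<m. x p ^ i * d p))"
    by (subst sum.swap) (simp add: sum_distrib_left)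
  finally show ?thesis .
qed

text \<open>Otherwise the polynomial vanishing at the other support points has degree below \<open>r\<close>,
  so by the power sums its weighted values sum to zero, although only the value at \<open>p0\<close>
  contributes.\<close>
lemma card_support_gt_if_power_sums_vanish:
  fixes x d :: "nat \<Rightarrow> 'a::field"
  assumes inj: "inj_on x {..<m}" and sums: "\<And>u. u < r \<Longrightarrow> (\<Sum>p<m. x p ^ u * d p) = 0"
    and p0: "p0 < m" "d p0 \<noteq> 0"
  shows "r < card {p\<in>{..<m}. d p \<noteq> 0}"
proof (rule ccontr)
  define R where "R = {p\<in>{..<m}. d p \<noteq> 0}"
  assume "\<not> r < card {p\<in>{..<m}. d p \<noteq> 0}"
  then have small: "card R \<le> r" by (simp add: R_def)
  have R: "finite R" "p0 \<in> R" using p0 by (auto simp: R_def)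
  define L where "L = (\<Prod>q\<in>R - {p0}. [:- x q, 1:])"
  have "degree L \<le> card (R - {p0})"
    using degree_prod_sum_le[of "R - {p0}" "\<lambda>q. [:- x q, 1:]"] R by (simp add: L_def)
  moreover have "0 < card R" using R by (auto simp: card_gt_0_iff)
  ultimately have "degree L < r" using small R by (simp add: card_Diff_singleton)
  then have "(\<Sum>p<m. poly L (x p) * d p) = 0"
    by (simp add: sum_poly_mult_eq_sum_coeff sums)
  also have "(\<Sum>p<m. poly L (x p) * d p)
      = poly L (x p0) * d p0 + (\<Sum>p\<in>{..<m} - {p0}. poly L (x p) * d p)"
    using p0 by (simp add: sum.remove)
  also have "(\<Sum>p\<in>{..<m} - {p0}. poly L (x p) * d p) = 0"
  proof (rule sum.neutral, rule ballI)
    fix p assume "p \<in> {..<m} - {p0}"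
    then show "poly L (x p) * d p = 0"
      by (cases "p \<in> R") (auto simp: R_def L_def poly_prod R(1))
  qed
  finally have "poly L (x p0) = 0" using p0 by simp
  then obtain q where "q \<in> R - {p0}" "x p0 = x q" by (auto simp: L_def poly_prod R(1))
  then show False using inj p0 by (auto simp: R_def inj_on_def)
qed

lemma degree_smult_linear_power_le: "degree (smult a ([:c, e:] ^ k)) \<le> k"
proof -
  have "degree ([:c, e:] ^ k) \<le> degree [:c, e:] * k" by (rule degree_power_le)
  also have "\<dots> \<le> k" by simp
  finally show ?thesis using degree_smult_le order_trans by blast
qed

lemma coeff_shifted_power_sum:
  fixes l c E :: "nat \<Rightarrow> 'a::field"
  assumes "i1 < M" and above: "\<And>i. i < M \<Longrightarrow> i1 < i \<Longrightarrow> l i = 0 \<or> E i = 0"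
  shows "coeff (\<Sum>i<M. smult (l i) ([:c i, E i:] ^ (i + 2))) (i1 + 2) = l i1 * E i1 ^ (i1 + 2)"
proof -
  have "coeff (smult (l i) ([:c i, E i:] ^ (i + 2))) (i1 + 2)
      = (if i = i1 then l i1 * E i1 ^ (i1 + 2) else 0)" if "i < M" for i
  proof (cases "i < i1")
    case True
    have "coeff (smult (l i) ([:c i, E i:] ^ (i + 2))) (i1 + 2) = 0"
      by (rule coeff_eq_0, rule le_less_trans[OF degree_smult_linear_power_le]) (use True in simp)
    then show ?thesis using True by simp
  next
    case False
    then have "coeff (smult (l i) ([:c i, E i:] ^ (i + 2))) (i1 + 2)
        = l i * (of_nat (i + 2 choose (i1 + 2)) * E i ^ (i1 + 2) * c i ^ (i - i1))"
      unfolding coeff_smult by (subst coeff_linear_poly_power) (use False in simp_all)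
    then show ?thesis using False above[OF that] by (cases "i = i1") auto
  qed
  then have "coeff (\<Sum>i<M. smult (l i) ([:c i, E i:] ^ (i + 2))) (i1 + 2)
      = (\<Sum>i<M. if i = i1 then l i1 * E i1 ^ (i1 + 2) else 0)"
    unfolding coeff_sum by (intro sum.cong) simp_all
  also have "\<dots> = l i1 * E i1 ^ (i1 + 2)" using assms(1) by simp
  finally show ?thesis .
qed

text \<open>The polynomial in \<open>t\<close> has a nonzero coefficient at \<open>t ^ (i + 2)\<close> for the largest
  index \<open>i\<close> carrying a nonvanishing term; the constant terms and \<open>y + z * t\<close> cannot cancel it.\<close>
lemma card_roots_shifted_power_sum:
  fixes l c E :: "nat \<Rightarrow> 'a::field"
  assumes "j < M" "l j \<noteq> 0" "E j \<noteq> 0"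
  shows "card {t. (\<Sum>i<M. l i * (c i + t * E i) ^ (i + 2)) = y + z * t} \<le> M + 1"
proof -
  define Q where "Q = (\<Sum>i<M. smult (l i) ([:c i, E i:] ^ (i + 2))) - [:y, z:]"
  have deg: "degree (smult (l i) ([:c i, E i:] ^ (i + 2))) \<le> M + 1" if "i < M" for i
    using degree_smult_linear_power_le[of "l i" "c i" "E i" "i + 2"] that by linarith
  have "degree Q \<le> M + 1"
    unfolding Q_def by (intro degree_diff_le degree_sum_le deg) auto
  define I where "I = {i. i < M \<and> l i \<noteq> 0 \<and> E i \<noteq> 0}"
  have I: "finite I" "j \<in> I" using assms by (auto simp: I_def)
  then have "Max I \<in> I" by (intro Max_in) auto
  then have top: "Max I < M" "l (Max I) \<noteq> 0" "E (Max I) \<noteq> 0" by (auto simp: I_def)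
  have above: "l i = 0 \<or> E i = 0" if "i < M" "Max I < i" for i
  proof (rule ccontr)
    assume "\<not> (l i = 0 \<or> E i = 0)"
    then have "i \<in> I" using \<open>i < M\<close> by (simp add: I_def)
    then show False using Max_ge[OF I(1), of i] \<open>Max I < i\<close> by simp
  qed
  have "coeff (\<Sum>i<M. smult (l i) ([:c i, E i:] ^ (i + 2))) (Max I + 2)
      = l (Max I) * E (Max I) ^ (Max I + 2)"
    using top(1) above by (rule coeff_shifted_power_sum)
  moreover have "coeff [:y, z:] (Max I + 2) = 0" by simp
  ultimately have "coeff Q (Max I + 2) = l (Max I) * E (Max I) ^ (Max I + 2)"
    unfolding Q_def coeff_diff by simp
  then have "Q \<noteq> 0" using top by auto
  have "poly Q t = (\<Sum>i<M. l i * (c i + t * E i) ^ (i + 2)) - (y + z * t)" for t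
    by (simp add: Q_def poly_sum mult.commute del: power_Suc)
  then have "{t. (\<Sum>i<M. l i * (c i + t * E i) ^ (i + 2)) = y + z * t} = {t. poly Q t = 0}"
    by simp
  also have "card \<dots> \<le> degree Q" by (rule card_poly_roots_bound[OF \<open>Q \<noteq> 0\<close>])
  finally show ?thesis using \<open>degree Q \<le> M + 1\<close> by simp
qed

lemma card_roots_power_sum:
  fixes c E :: "nat \<Rightarrow> 'a::field"
  assumes "p0 < m" "E p0 \<noteq> 0"
  shows "card {t. (\<Sum>p<m. (c p + t * E p) ^ (p + 2)) = y + z * t} \<le> m + 1"
  using card_roots_shifted_power_sum[where l = "\<lambda>_. 1" and j = p0 and M = m and E = E] assms
  by simp

lemma sum_lessThan_add:
  fixes f :: "nat \<Rightarrow> 'a::comm_monoid_add"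
  shows "(\<Sum>i<m + j. f i) = (\<Sum>i<m. f i) + (\<Sum>i<j. f (m + i))"
  by (induction j) (simp_all add: add.assoc)

text \<open>The two sums merge into one sum over \<open>i < 2 * m\<close> with exponents \<open>i + 2\<close>.\<close>
lemma card_roots_two_power_sums:
  fixes c E :: "nat \<Rightarrow> 'a::field"
  assumes "p0 < m" "E p0 \<noteq> 0"
  shows "card {t. r * (\<Sum>p<m. (c p + t * E p) ^ (p + 2)) + (\<Sum>p<m. (c p + t * E p) ^ (m + p + 2))
                  = y + z * t} \<le> 2 * m + 1"
proof -
  define l where "l i = (if i < m then r else 1)" for i
  have "r * (\<Sum>p<m. (c p + t * E p) ^ (p + 2)) + (\<Sum>p<m. (c p + t * E p) ^ (m + p + 2))
      = (\<Sum>i<m + m. l i * (c (i mod m) + t * E (i mod m)) ^ (i + 2))" for t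
    by (simp add: sum_lessThan_add l_def sum_distrib_left add.assoc)
  moreover have "card {t. (\<Sum>i<m + m. l i * (c (i mod m) + t * E (i mod m)) ^ (i + 2)) = y + z * t}
      \<le> m + m + 1"
    using assms by (intro card_roots_shifted_power_sum[where j = "m + p0"]) (simp_all add: l_def)
  ultimately show ?thesis by (simp add: mult_2)
qed

section \<open>Partial fractions\<close>

text \<open>The solution \<open>E\<close> of \<open>(r + x p) * E p = w p\<close> for \<open>p < m\<close> with \<open>\<Sum>p<m. E p = 0\<close>. At a pole
  \<open>r = - x p\<close> the entry \<open>E p\<close> is forced by the sum condition; there the pole term of the sum is
  harmlessly \<open>w p / 0 = 0\<close>.\<close>
definition fraction_vec :: "nat \<Rightarrow> (nat \<Rightarrow> 'a::field) \<Rightarrow> (nat \<Rightarrow> 'a) \<Rightarrow> 'a \<Rightarrow> nat \<Rightarrow> 'a" where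
  "fraction_vec m x w r p =
     (if r + x p = 0 then - (\<Sum>q<m. w q / (r + x q)) else w p / (r + x p))"

definition fraction_params :: "nat \<Rightarrow> (nat \<Rightarrow> 'a::field) \<Rightarrow> (nat \<Rightarrow> 'a) \<Rightarrow> 'a set" where
  "fraction_params m x w =
     {r. ((\<exists>p<m. r + x p = 0) \<or> (\<Sum>p<m. w p / (r + x p)) = 0)
         \<and> (\<exists>p<m. fraction_vec m x w r p \<noteq> 0)}"

lemma fraction_vec_unique:
  fixes x w d :: "nat \<Rightarrow> 'a::field"
  assumes inj: "inj_on x {..<m}" and eqs: "\<And>p. p < m \<Longrightarrow> (r + x p) * d p = t * w p"
    and sum: "(\<Sum>p<m. d p) = 0" and "p < m"
  shows "d p = t * fraction_vec m x w r p"
proof (cases "r + x p = 0")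
  case False
  then show ?thesis using eqs[OF \<open>p < m\<close>] by (simp add: fraction_vec_def field_simps)
next
  case True
  have d_other: "d q = t * (w q / (r + x q))" if "q \<in> {..<m} - {p}" for q
  proof -
    have "x q \<noteq> x p" using that inj \<open>p < m\<close> by (auto simp: inj_on_def)
    then have "r + x q \<noteq> 0" using True by (metis add_left_cancel)
    then show ?thesis using eqs[of q] that by (simp add: field_simps)
  qed
  have "0 = d p + (\<Sum>q\<in>{..<m} - {p}. d q)" using sum \<open>p < m\<close> by (simp add: sum.remove)
  also have "(\<Sum>q\<in>{..<m} - {p}. d q) = t * (\<Sum>q\<in>{..<m} - {p}. w q / (r + x q))"
    by (simp add: d_other sum_distrib_left)
  also have "(\<Sum>q\<in>{..<m} - {p}. w q / (r + x q)) = (\<Sum>q<m. w q / (r + x q))"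
    using \<open>p < m\<close> True by (simp add: sum.remove)
  finally show ?thesis using True by (simp add: fraction_vec_def eq_neg_iff_add_eq_0)
qed

lemma fraction_params_memI:
  fixes x w d :: "nat \<Rightarrow> 'a::field"
  assumes inj: "inj_on x {..<m}" and eqs: "\<And>p. p < m \<Longrightarrow> (r + x p) * d p = t * w p"
    and sum: "(\<Sum>p<m. d p) = 0" and "t \<noteq> 0" and p0: "p0 < m" "d p0 \<noteq> 0"
  shows "r \<in> fraction_params m x w"
proof -
  have d: "d p = t * fraction_vec m x w r p" if "p < m" for p
    using fraction_vec_unique[OF inj eqs sum that] .
  have "(\<Sum>p<m. w p / (r + x p)) = 0" if "\<forall>p<m. r + x p \<noteq> 0"
  proof -
    have "t * (\<Sum>p<m. w p / (r + x p)) = (\<Sum>p<m. d p)"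
      using that by (simp add: d fraction_vec_def sum_distrib_left)
    then show ?thesis using sum \<open>t \<noteq> 0\<close> by simp
  qed
  moreover have "fraction_vec m x w r p0 \<noteq> 0" using d[OF p0(1)] p0(2) by auto
  ultimately show ?thesis using p0(1) by (auto simp: fraction_params_def)
qed

text \<open>Clearing denominators turns \<open>\<Sum>p<m. w p / (r + x p) = 0\<close> into a polynomial equation of
  degree below \<open>m\<close>, which is nonzero at \<open>- x p\<close> whenever \<open>w p \<noteq> 0\<close>.\<close>
lemma partial_fraction_zeros_subset_roots:
  fixes x w :: "nat \<Rightarrow> 'a::field"
  assumes inj: "inj_on x {..<m}" and p0: "p0 < m" "w p0 \<noteq> 0"
  obtains N where "N \<noteq> 0" "degree N \<le> m - 1"
    "{r. (\<forall>p<m. r + x p \<noteq> 0) \<and> (\<Sum>p<m. w p / (r + x p)) = 0} \<subseteq> {r. poly N r = 0}"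
proof
  define N where "N = (\<Sum>p<m. smult (w p) (\<Prod>q\<in>{..<m} - {p}. [:x q, 1:]))"
  have poly_N: "poly N r = (\<Sum>p<m. w p * (\<Prod>q\<in>{..<m} - {p}. r + x q))" for r
    by (simp add: N_def poly_sum poly_prod algebra_simps)
  show "degree N \<le> m - 1" unfolding N_def
  proof (rule degree_sum_le)
    fix p assume "p \<in> {..<m}"
    have "degree (\<Prod>q\<in>{..<m} - {p}. [:x q, 1:]) \<le> card ({..<m} - {p})"
      using degree_prod_sum_le[of "{..<m} - {p}" "\<lambda>q. [:x q, 1:]"] by simp
    then show "degree (smult (w p) (\<Prod>q\<in>{..<m} - {p}. [:x q, 1:])) \<le> m - 1"
      using \<open>p \<in> {..<m}\<close> degree_smult_le order_trans by fastforce
  qed simp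
  have "poly N (- x p0) = w p0 * (\<Prod>q\<in>{..<m} - {p0}. - x p0 + x q)"
  proof -
    have "poly N (- x p0) = (\<Sum>p<m. if p = p0 then w p0 * (\<Prod>q\<in>{..<m} - {p0}. - x p0 + x q) else 0)"
      unfolding poly_N using p0(1) by (intro sum.cong refl) (auto intro!: prod_zero)
    then show ?thesis using p0(1) by simp
  qed
  moreover have "- x p0 + x q \<noteq> 0" if "q \<in> {..<m} - {p0}" for q
    using inj that p0(1) by (auto simp: inj_on_def add_eq_0_iff)
  ultimately have "poly N (- x p0) \<noteq> 0" using p0(2) by simp
  then show "N \<noteq> 0" by auto
  show "{r. (\<forall>p<m. r + x p \<noteq> 0) \<and> (\<Sum>p<m. w p / (r + x p)) = 0} \<subseteq> {r. poly N r = 0}"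
  proof safe
    fix r assume nz: "\<forall>p<m. r + x p \<noteq> 0" and zero: "(\<Sum>p<m. w p / (r + x p)) = 0"
    have "poly N r = (\<Sum>p<m. w p / (r + x p)) * (\<Prod>q<m. r + x q)"
      unfolding poly_N sum_distrib_right
    proof (intro sum.cong refl)
      fix p assume "p \<in> {..<m}"
      then have "(\<Prod>q<m. r + x q) = (r + x p) * (\<Prod>q\<in>{..<m} - {p}. r + x q)"
        by (simp add: prod.remove)
      then show "w p * (\<Prod>q\<in>{..<m} - {p}. r + x q) = w p / (r + x p) * (\<Prod>q<m. r + x q)"
        using nz \<open>p \<in> {..<m}\<close> by simp
    qed
    then show "poly N r = 0" using zero by simp
  qed
qed

lemma card_fraction_params:
  fixes x w :: "nat \<Rightarrow> 'a::field"
  assumes inj: "inj_on x {..<m}"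
  shows "card (fraction_params m x w) \<le> 2 * m"
proof (cases "\<exists>p<m. w p \<noteq> 0")
  case True
  then obtain p0 where p0: "p0 < m" "w p0 \<noteq> 0" by blast
  obtain N where N: "N \<noteq> 0" "degree N \<le> m - 1"
    and roots: "{r. (\<forall>p<m. r + x p \<noteq> 0) \<and> (\<Sum>p<m. w p / (r + x p)) = 0} \<subseteq> {r. poly N r = 0}"
    using partial_fraction_zeros_subset_roots[of x m p0 w] inj p0 by blast
  have "fraction_params m x w \<subseteq> (\<lambda>p. - x p) ` {..<m} \<union> {r. poly N r = 0}"
    using roots by (fastforce simp: fraction_params_def eq_neg_iff_add_eq_0)
  then have "card (fraction_params m x w) \<le> card ((\<lambda>p. - x p) ` {..<m} \<union> {r. poly N r = 0})"
    using poly_roots_finite[OF N(1)] by (intro card_mono) auto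
  also have "\<dots> \<le> card ((\<lambda>p. - x p) ` {..<m}) + card {r. poly N r = 0}"
    by (rule card_Un_le)
  also have "\<dots> \<le> m + (m - 1)"
    using card_image_le[of "{..<m}" "\<lambda>p. - x p"] card_poly_roots_bound[OF N(1)] N(2)
    by (intro add_mono) auto
  finally show ?thesis by simp
next
  case False
  then have "fraction_vec m x w r p = 0" if "p < m" for r p
    using that by (simp add: fraction_vec_def)
  then have "fraction_params m x w = {}" by (auto simp: fraction_params_def)
  then show ?thesis by simp
qed

lemma dim2_difference_cases:
  fixes x w c c' :: "nat \<Rightarrow> 'a::field"
  assumes inj: "inj_on x {..<m}"
    and mid: "\<And>p. p < m \<Longrightarrow> (a + b * x p) * (c' p - c p) = w p"
    and last: "a * ((\<Sum>p<m. c' p ^ (p + 2)) - (\<Sum>p<m. c p ^ (p + 2)))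
             + b * ((\<Sum>p<m. c' p ^ (m + p + 2)) - (\<Sum>p<m. c p ^ (m + p + 2))) = z"
    and sum: "(\<Sum>p<m. c' p - c p) = 0"
    and changed: "j < m" "c' j \<noteq> c j" and nonzero: "a \<noteq> 0 \<or> b \<noteq> 0"
  obtains (linear) t where "\<And>p. p < m \<Longrightarrow> c' p = c p + t * w p" "w j \<noteq> 0"
      "(\<Sum>p<m. (c p + t * w p) ^ (p + 2)) = (\<Sum>p<m. c p ^ (p + 2)) + z * t"
  | (fraction) r t where "r \<in> fraction_params m x w"
      "\<And>p. p < m \<Longrightarrow> c' p = c p + t * fraction_vec m x w r p"
      "r * (\<Sum>p<m. (c p + t * fraction_vec m x w r p) ^ (p + 2))
         + (\<Sum>p<m. (c p + t * fraction_vec m x w r p) ^ (m + p + 2))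
       = r * (\<Sum>p<m. c p ^ (p + 2)) + (\<Sum>p<m. c p ^ (m + p + 2)) + z * t"
proof (cases "b = 0")
  case True
  define t where "t = 1 / a"
  have "a \<noteq> 0" using nonzero True by simp
  then have shift: "c' p = c p + t * w p" if "p < m" for p
    using mid[OF that] True by (simp add: t_def field_simps)
  moreover have "w j \<noteq> 0" using shift[OF changed(1)] changed(2) by auto
  moreover have "(\<Sum>p<m. (c p + t * w p) ^ (p + 2)) = (\<Sum>p<m. c' p ^ (p + 2))"
    by (intro sum.cong refl) (simp add: shift)
  moreover have "X = Y + z * t" if "a * (X - Y) = z" for X Y
    using that \<open>a \<noteq> 0\<close> by (simp add: t_def field_simps)
  ultimately show thesis using last True by (intro linear) auto
next
  case False
  define t where "t = 1 / b"
  define r where "r = a * t"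
  have "t \<noteq> 0" using False by (simp add: t_def)
  have eqs: "(r + x p) * (c' p - c p) = t * w p" if "p < m" for p
    using mid[OF that] False by (simp add: r_def t_def field_simps)
  then have shift: "c' p = c p + t * fraction_vec m x w r p" if "p < m" for p
    using fraction_vec_unique[OF inj eqs sum that] by (simp add: algebra_simps)
  have "r \<in> fraction_params m x w"
    using changed by (intro fraction_params_memI[OF inj eqs sum \<open>t \<noteq> 0\<close>]) auto
  moreover have "(\<Sum>p<m. (c p + t * fraction_vec m x w r p) ^ e p) = (\<Sum>p<m. c' p ^ e p)" for e
    by (intro sum.cong refl) (simp add: shift)
  moreover have "r * X0 + X1 = r * Y0 + Y1 + z * t" if "a * (X0 - Y0) + b * (X1 - Y1) = z"
    for X0 Y0 X1 Y1
    using that False by (simp add: r_def t_def field_simps)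
  ultimately show thesis using last shift by (intro fraction) auto
qed

section \<open>The code and the subspaces\<close>

lemma finite_vecs: "finite (vecs m :: (nat \<Rightarrow> 'a::{finite,zero}) set)"
proof -
  have "vecs m = {f :: nat \<Rightarrow> 'a. \<forall>j. (j \<in> {..<m} \<longrightarrow> f j \<in> UNIV) \<and> (j \<notin> {..<m} \<longrightarrow> f j = 0)}"
    by (auto simp: vecs_def not_less)
  then show ?thesis using finite_set_of_finite_funs[of "{..<m}" "UNIV :: 'a set" 0] by simp
qed

lemma finite_code: "finite (code n k g :: (nat \<Rightarrow> 'a::{finite,field}) set)"
  by (rule finite_subset[OF _ finite_vecs[of "n - k - 1"]]) (auto simp: code_def)

lemma code_in_vecs: "c \<in> code n k g \<Longrightarrow> c \<in> vecs (n - k - 1)"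
  by (simp add: code_def)

lemma less_if_vecs_differ:
  assumes "c \<in> vecs m" "c' \<in> vecs m" "c p \<noteq> c' p"
  shows "p < m"
proof (rule ccontr)
  assume "\<not> p < m"
  then have "c p = 0" "c' p = 0" using assms(1,2) by (simp_all add: vecs_def)
  then show False using assms(3) by simp
qed

lemma code_power_sum:
  "c \<in> code n k g \<Longrightarrow> u + 2 \<le> k \<Longrightarrow> (\<Sum>p<n - k - 1. (g ^ p) ^ u * c p) = 0"
  by (simp add: code_def flip: power_mult)

definition shift_vec :: "nat \<Rightarrow> (nat \<Rightarrow> 'a::field) \<Rightarrow> (nat \<Rightarrow> 'a) \<Rightarrow> 'a \<Rightarrow> nat \<Rightarrow> 'a" where
  "shift_vec m c D t = (\<lambda>p. if p < m then c p + t * D p else 0)"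

lemma code_eq_shift_vec:
  assumes "c \<in> vecs m" "c' \<in> vecs m" "\<And>p. p < m \<Longrightarrow> c' p = c p + t * D p"
  shows "c' = shift_vec m c D t"
  using assms by (auto simp: vecs_def shift_vec_def fun_eq_iff not_less)

lemma card_diff_support_gt_if_code:
  assumes inj: "inj_on (\<lambda>p. g ^ p) {..<n - k - 1}"
    and c: "c \<in> code n k g" "c' \<in> code n k g" "c \<noteq> c'"
  shows "k - 1 < card {p\<in>{..<n - k - 1}. c p \<noteq> c' p}"
proof -
  obtain p0 where p0: "c p0 \<noteq> c' p0" using c(3) by (auto simp: fun_eq_iff)
  have "p0 < n - k - 1" using less_if_vecs_differ[OF code_in_vecs[OF c(1)] code_in_vecs[OF c(2)] p0] .
  have "k - 1 < card {p\<in>{..<n - k - 1}. c p - c' p \<noteq> 0}"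
  proof (rule card_support_gt_if_power_sums_vanish[where x = "\<lambda>p. g ^ p" and d = "\<lambda>p. c p - c' p"])
    show "(\<Sum>p<n - k - 1. (g ^ p) ^ u * (c p - c' p)) = 0" if "u < k - 1" for u
      using code_power_sum[OF c(1), of u] code_power_sum[OF c(2), of u] that
      by (simp add: right_diff_distrib sum_subtractf)
  qed (use inj p0 \<open>p0 < n - k - 1\<close> in auto)
  then show ?thesis by simp
qed

definition vcomb :: "nat \<Rightarrow> nat \<Rightarrow> 'a::field \<Rightarrow> (nat \<Rightarrow> 'a) \<Rightarrow> (nat \<Rightarrow> 'a) \<Rightarrow> nat \<Rightarrow> 'a" where
  "vcomb n k g c a = (\<lambda>j. \<Sum>t<k. a t * vgen n k g c t j)"

lemma Ssub_eq_range_vcomb: "Ssub n k g c = range (vcomb n k g c)"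
  by (auto simp: Ssub_def lspan_def vcomb_def intro!: sum.cong)

lemma vcomb_zero: "vcomb n k g c (\<lambda>_. 0) = zvec"
  by (simp add: vcomb_def zvec_def)

lemma zvec_in_Ssub: "zvec \<in> Ssub n k g c"
  by (metis Ssub_eq_range_vcomb rangeI vcomb_zero)

lemma vcomb_unit:
  assumes "j < k"
  shows "vcomb n k g c a j = a j"
proof -
  have "vcomb n k g c a j = (\<Sum>t<k. if t = j then a t else 0)"
    unfolding vcomb_def using assms by (intro sum.cong) (auto simp: vgen_def)
  then show ?thesis using assms by simp
qed

lemma vcomb_middle:
  assumes "p < n - k - 1"
  shows "vcomb n k g c a (k + p) = (\<Sum>t<k. a t * (g ^ (p + 1)) ^ t) * c p"
proof -
  have "k + p < n - 1" using assms by linarith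
  then have "vgen n k g c t (k + p) = (g ^ (p + 1)) ^ t * c p" for t
    by (simp add: vgen_def flip: power_mult del: power_Suc)
  then show ?thesis by (simp add: vcomb_def sum_distrib_right mult.assoc)
qed

lemma vcomb_last:
  assumes "k < n"
  shows "vcomb n k g c a (n - 1) = (\<Sum>t<k. a t * (\<Sum>p<n - k - 1. c p ^ (t * (n - k - 1) + p + 2)))"
proof -
  have "\<not> n - 1 < k" using assms by arith
  then show ?thesis by (simp add: vcomb_def vgen_def del: power_Suc)
qed

lemma vcomb_cong: "(\<And>t. t < k \<Longrightarrow> a t = b t) \<Longrightarrow> vcomb n k g c a = vcomb n k g c b"
  by (auto simp: vcomb_def intro!: sum.cong)

lemma vcomb_diff: "vcomb n k g c (\<lambda>t. a t - b t) j = vcomb n k g c a j - vcomb n k g c b j"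
  by (simp add: vcomb_def left_diff_distrib sum_subtractf)

lemma kdim_subspace_Ssub:
  assumes "2 * k < n"
  shows "kdim_subspace n k (Ssub n k g c)"
  unfolding kdim_subspace_def
proof (intro exI conjI)
  let ?B = "map (vgen n k g c) [0..<k]"
  show "length ?B = k" by simp
  show "set ?B \<subseteq> vecs n" using assms by (auto simp: vecs_def vgen_def)
  show "lspan ?B = Ssub n k g c" by (simp add: Ssub_def)
  show "lin_indep ?B" unfolding lin_indep_def
  proof (intro allI impI)
    fix a t assume "(\<lambda>j. \<Sum>t<length ?B. a t * (?B ! t) j) = zvec" and t: "t < length ?B"
    then have "vcomb n k g c a = zvec" by (simp add: vcomb_def)
    then show "a t = 0" using vcomb_unit[of t k n g c a] t by (simp add: zvec_def)
  qed
qed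

lemma card_diff_support_le_if_vcomb_eq:
  assumes inj: "inj_on (\<lambda>p. g ^ (p + 1)) {..<n - k - 1}"
    and eq: "vcomb n k g c a = vcomb n k g c' b" and "t < k" "a t \<noteq> 0"
  shows "card {p\<in>{..<n - k - 1}. c p \<noteq> c' p} \<le> k - 1"
proof -
  define P where "P = (\<Sum>t<k. monom (a t) t)"
  have "coeff P t = a t" using \<open>t < k\<close> by (simp add: P_def coeff_sum)
  then have "P \<noteq> 0" using \<open>a t \<noteq> 0\<close> by auto
  have "a s = b s" if "s < k" for s
    using fun_cong[OF eq, of s] that by (simp add: vcomb_unit)
  then have "poly P (g ^ (p + 1)) * (c p - c' p) = 0" if "p < n - k - 1" for p
    using fun_cong[OF eq, of "k + p"] that
    by (simp add: vcomb_middle P_def poly_sum poly_monom right_diff_distrib)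
  then have "card {p\<in>{..<n - k - 1}. c p - c' p \<noteq> 0} \<le> degree P"
    by (intro card_nonzero_le_degree[OF \<open>P \<noteq> 0\<close> inj]) simp
  also have "degree P \<le> k - 1"
    unfolding P_def by (rule degree_sum_le) (auto intro: order_trans[OF degree_monom_le])
  finally show ?thesis by simp
qed

lemma Ssub_inter_Ssub:
  fixes g :: "'a::{finite,field}"
  assumes nk: "2 * k < n" and q: "n * k \<le> card (UNIV :: 'a set)" and g: "primitive_element g"
    and c: "c \<in> code n k g" "c' \<in> code n k g" "c \<noteq> c'"
  shows "Ssub n k g c \<inter> Ssub n k g c' = {zvec}"
proof -
  have coeffs_zero: "a t = 0" if eq: "vcomb n k g c a = vcomb n k g c' b" and "t < k" for a b t
  proof (rule ccontr)
    assume "a t \<noteq> 0"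
    have "n \<le> n * k" using \<open>t < k\<close> by simp
    then have "n - k - 1 + 1 \<le> card (UNIV :: 'a set) - 1" using q nk \<open>t < k\<close> by arith
    then have inj: "inj_on (\<lambda>p. g ^ p) {..<n - k - 1 + 1}"
      using inj_on_subset[OF primitive_element_inj_on_power[OF g]] by auto
    from card_diff_support_le_if_vcomb_eq[OF inj_on_shift_lessThan[OF inj] eq \<open>t < k\<close> \<open>a t \<noteq> 0\<close>]
    show False using card_diff_support_gt_if_code[OF inj_on_subset[OF inj] c] by auto
  qed
  show ?thesis
  proof
    show "Ssub n k g c \<inter> Ssub n k g c' \<subseteq> {zvec}"
    proof
      fix v assume "v \<in> Ssub n k g c \<inter> Ssub n k g c'"
      then obtain a b where v: "v = vcomb n k g c a" "vcomb n k g c a = vcomb n k g c' b"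
        by (auto simp: Ssub_eq_range_vcomb)
      then have "vcomb n k g c a = vcomb n k g c (\<lambda>_. 0)"
        using coeffs_zero by (intro vcomb_cong) blast
      then show "v \<in> {zvec}" using v by (simp add: vcomb_zero)
    qed
    show "{zvec} \<subseteq> Ssub n k g c \<inter> Ssub n k g c'" using zvec_in_Ssub by blast
  qed
qed

section \<open>Translates meeting the subspaces\<close>

definition residual :: "nat \<Rightarrow> nat \<Rightarrow> 'a::field \<Rightarrow> (nat \<Rightarrow> 'a) \<Rightarrow> (nat \<Rightarrow> 'a) \<Rightarrow> nat \<Rightarrow> 'a" where
  "residual n k g c u = (\<lambda>j. u j - vcomb n k g c u j)"

lemma residual_nonzero_if_not_in_Ssub:
  assumes "u \<notin> Ssub n k g c"
  shows "\<exists>j. residual n k g c u j \<noteq> 0"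
proof (rule ccontr)
  assume "\<nexists>j. residual n k g c u j \<noteq> 0"
  then have "u = vcomb n k g c u" by (auto simp: residual_def)
  then show False using assms by (metis Ssub_eq_range_vcomb rangeI)
qed

lemma translate_meets_Ssub_residual:
  assumes "affine_translate u (Ssub n k g c) \<inter> Ssub n k g c' \<noteq> {}"
  obtains b where "\<And>j. vcomb n k g c' b j - vcomb n k g c b j = residual n k g c u j"
proof -
  obtain a b where eq: "\<And>j. u j + vcomb n k g c a j = vcomb n k g c' b j"
    using assms by (auto simp: affine_translate_def Ssub_eq_range_vcomb) metis
  have "b t - u t = a t" if "t < k" for t
    using eq[of t] that by (simp add: vcomb_unit algebra_simps)
  then have "vcomb n k g c a = vcomb n k g c (\<lambda>t. b t - u t)" by (intro vcomb_cong) simp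
  then have "vcomb n k g c' b j - vcomb n k g c b j = residual n k g c u j" for j
    using eq[of j] by (simp add: residual_def vcomb_diff algebra_simps)
  then show thesis by (rule that)
qed

lemma translate_meets_Ssub_nondegenerate:
  assumes "u \<notin> Ssub n k g c"
    and eq: "\<And>j. vcomb n k g c' b j - vcomb n k g c b j = residual n k g c u j"
  shows "\<exists>t<k. b t \<noteq> 0" and "c' \<noteq> c"
proof -
  obtain j where j: "residual n k g c u j \<noteq> 0"
    using residual_nonzero_if_not_in_Ssub[OF assms(1)] by blast
  show "\<exists>t<k. b t \<noteq> 0"
  proof (rule ccontr)
    assume "\<not> (\<exists>t<k. b t \<noteq> 0)"
    then have "vcomb n k g c'' b = zvec" for c''
      by (metis vcomb_cong vcomb_zero)
    then show False using eq[of j] j by (simp add: zvec_def)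
  qed
  show "c' \<noteq> c" using eq[of j] j by auto
qed

lemma translate_meets_Ssub_equations:
  assumes "k < n" and u: "u \<notin> Ssub n k g c"
    and meet: "affine_translate u (Ssub n k g c) \<inter> Ssub n k g c' \<noteq> {}"
  obtains b where "\<exists>t<k. b t \<noteq> 0" and "c' \<noteq> c"
    and "\<And>p. p < n - k - 1 \<Longrightarrow>
      (\<Sum>t<k. b t * (g ^ (p + 1)) ^ t) * (c' p - c p) = residual n k g c u (k + p)"
    and "(\<Sum>t<k. b t * ((\<Sum>p<n - k - 1. c' p ^ (t * (n - k - 1) + p + 2))
                        - (\<Sum>p<n - k - 1. c p ^ (t * (n - k - 1) + p + 2))))
      = residual n k g c u (n - 1)"
proof -
  obtain b where eq: "\<And>j. vcomb n k g c' b j - vcomb n k g c b j = residual n k g c u j"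
    using translate_meets_Ssub_residual[OF meet] by blast
  show thesis
  proof (rule that[of b])
    show "\<exists>t<k. b t \<noteq> 0" "c' \<noteq> c" using translate_meets_Ssub_nondegenerate[OF u eq] by auto
    show "(\<Sum>t<k. b t * (g ^ (p + 1)) ^ t) * (c' p - c p) = residual n k g c u (k + p)"
      if "p < n - k - 1" for p
      using eq[of "k + p"] by (simp add: vcomb_middle[OF that] right_diff_distrib)
    show "(\<Sum>t<k. b t * ((\<Sum>p<n - k - 1. c' p ^ (t * (n - k - 1) + p + 2))
                        - (\<Sum>p<n - k - 1. c p ^ (t * (n - k - 1) + p + 2))))
      = residual n k g c u (n - 1)"
      using eq[of "n - 1"] unfolding vcomb_last[OF \<open>k < n\<close>]
      by (simp add: right_diff_distrib sum_subtractf del: power_Suc)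
  qed
qed

lemma meeting_codeword_dim1:
  assumes "2 < n" and c: "c \<in> code n 1 g" "c' \<in> code n 1 g" and u: "u \<notin> Ssub n 1 g c"
    and meet: "affine_translate u (Ssub n 1 g c) \<inter> Ssub n 1 g c' \<noteq> {}"
    and m: "m = n - 2" and w: "\<And>p. w p = residual n 1 g c u (1 + p)"
    and z: "z = residual n 1 g c u (n - 1)"
  obtains t where "c' = shift_vec m c w t" "\<exists>p<m. w p \<noteq> 0"
    "(\<Sum>p<m. (c p + t * w p) ^ (p + 2)) = (\<Sum>p<m. c p ^ (p + 2)) + z * t"
proof -
  have "1 < n" using \<open>2 < n\<close> by simp
  obtain b where "\<exists>t<1. b t \<noteq> 0" "c' \<noteq> c"
    and mid: "\<And>p. p < n - 1 - 1 \<Longrightarrow>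
      (\<Sum>t<1. b t * (g ^ (p + 1)) ^ t) * (c' p - c p) = residual n 1 g c u (1 + p)"
    and last: "(\<Sum>t<1. b t * ((\<Sum>p<n - 1 - 1. c' p ^ (t * (n - 1 - 1) + p + 2))
                      - (\<Sum>p<n - 1 - 1. c p ^ (t * (n - 1 - 1) + p + 2))))
      = residual n 1 g c u (n - 1)"
    using translate_meets_Ssub_equations[OF \<open>1 < n\<close> u meet] by blast
  have "b 0 \<noteq> 0" using \<open>\<exists>t<1. b t \<noteq> 0\<close> by simp
  define t where "t = 1 / b 0"
  have shift: "c' p = c p + t * w p" if "p < m" for p
    using mid[of p] that \<open>b 0 \<noteq> 0\<close> by (simp add: m w t_def field_simps)
  have "b 0 * ((\<Sum>p<m. c' p ^ (p + 2)) - (\<Sum>p<m. c p ^ (p + 2))) = z"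
    using last by (simp add: m z numeral_2_eq_2)
  then have "(\<Sum>p<m. (c p + t * w p) ^ (p + 2)) = (\<Sum>p<m. c p ^ (p + 2)) + z * t"
    using \<open>b 0 \<noteq> 0\<close> shift by (simp add: t_def field_simps del: power_Suc)
  moreover have vecs: "c \<in> vecs m" "c' \<in> vecs m"
    using code_in_vecs[OF c(1)] code_in_vecs[OF c(2)] by (simp_all add: m numeral_2_eq_2)
  then have "c' = shift_vec m c w t" using shift by (rule code_eq_shift_vec)
  moreover obtain p where "c' p \<noteq> c p" using \<open>c' \<noteq> c\<close> by (auto simp: fun_eq_iff)
  moreover have "p < m" using less_if_vecs_differ[OF vecs(2,1) calculation(3)] .
  ultimately show thesis using shift by (intro that) auto
qed

lemma card_meeting_codewords_dim1:
  fixes g :: "'a::{finite,field}"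
  assumes n: "2 < n" and c: "c \<in> code n 1 g" and u: "u \<notin> Ssub n 1 g c"
  shows "card {c'\<in>code n 1 g. affine_translate u (Ssub n 1 g c) \<inter> Ssub n 1 g c' \<noteq> {}} \<le> n - 1"
proof -
  define m where "m = n - 2"
  define w where "w p = residual n 1 g c u (1 + p)" for p
  define z where "z = residual n 1 g c u (n - 1)"
  define roots where "roots = {t. (\<Sum>p<m. (c p + t * w p) ^ (p + 2)) = (\<Sum>p<m. c p ^ (p + 2)) + z * t}"
  let ?C = "{c'\<in>code n 1 g. affine_translate u (Ssub n 1 g c) \<inter> Ssub n 1 g c' \<noteq> {}}"
  have param: "c' \<in> shift_vec m c w ` roots \<and> (\<exists>p<m. w p \<noteq> 0)" if "c' \<in> ?C" for c'
    using that by (elim CollectE conjE meeting_codeword_dim1[OF n c _ u _ m_def w_def z_def])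
      (auto simp: roots_def)
  show ?thesis
  proof (cases "?C = {}")
    case False
    then obtain p0 where "p0 < m" "w p0 \<noteq> 0" using param by blast
    have "card ?C \<le> card (shift_vec m c w ` roots)"
      using param by (intro card_mono) auto
    also have "\<dots> \<le> card roots" by (rule card_image_le) simp
    also have "\<dots> \<le> m + 1"
      unfolding roots_def using \<open>p0 < m\<close> \<open>w p0 \<noteq> 0\<close> by (rule card_roots_power_sum)
    finally show ?thesis using n by (simp add: m_def)
  next
    case True
    then show ?thesis by (simp only: card.empty zero_le)
  qed
qed

lemma meeting_codeword_dim2:
  assumes "4 < n" and inj: "inj_on x {..<m}" and c: "c \<in> code n 2 g" "c' \<in> code n 2 g"
    and u: "u \<notin> Ssub n 2 g c" and meet: "affine_translate u (Ssub n 2 g c) \<inter> Ssub n 2 g c' \<noteq> {}"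
    and m: "m = n - 3" and x: "\<And>p. x p = g ^ (p + 1)"
    and w: "\<And>p. w p = residual n 2 g c u (2 + p)" and z: "z = residual n 2 g c u (n - 1)"
  obtains (linear) t where "c' = shift_vec m c w t" "\<exists>p<m. w p \<noteq> 0"
    "(\<Sum>p<m. (c p + t * w p) ^ (p + 2)) = (\<Sum>p<m. c p ^ (p + 2)) + z * t"
  | (fraction) r t where "r \<in> fraction_params m x w" "c' = shift_vec m c (fraction_vec m x w r) t"
    "r * (\<Sum>p<m. (c p + t * fraction_vec m x w r p) ^ (p + 2))
       + (\<Sum>p<m. (c p + t * fraction_vec m x w r p) ^ (m + p + 2))
     = r * (\<Sum>p<m. c p ^ (p + 2)) + (\<Sum>p<m. c p ^ (m + p + 2)) + z * t"
proof -
  have "2 < n" using \<open>4 < n\<close> by simp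
  obtain b where "\<exists>t<2. b t \<noteq> 0" "c' \<noteq> c"
    and mid: "\<And>p. p < n - 2 - 1 \<Longrightarrow>
      (\<Sum>t<2. b t * (g ^ (p + 1)) ^ t) * (c' p - c p) = residual n 2 g c u (2 + p)"
    and last: "(\<Sum>t<2. b t * ((\<Sum>p<n - 2 - 1. c' p ^ (t * (n - 2 - 1) + p + 2))
                      - (\<Sum>p<n - 2 - 1. c p ^ (t * (n - 2 - 1) + p + 2))))
      = residual n 2 g c u (n - 1)"
    using translate_meets_Ssub_equations[OF \<open>2 < n\<close> u meet] by blast
  have m': "n - 2 - 1 = m" by (simp add: m)
  have vecs: "c \<in> vecs m" "c' \<in> vecs m" using code_in_vecs[OF c(1)] code_in_vecs[OF c(2)] unfolding m' .
  obtain j where j: "c' j \<noteq> c j" using \<open>c' \<noteq> c\<close> by (auto simp: fun_eq_iff)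
  have "j < m" using less_if_vecs_differ[OF vecs(2,1) j] .
  show thesis
  proof (rule dim2_difference_cases[OF inj, where a = "b 0" and b = "b 1" and c' = c' and c = c
        and w = w and z = z and j = j])
    show "(b 0 + b 1 * x p) * (c' p - c p) = w p" if "p < m" for p
      using mid[of p] that unfolding m' by (simp add: x w numeral_2_eq_2)
    show "b 0 * ((\<Sum>p<m. c' p ^ (p + 2)) - (\<Sum>p<m. c p ^ (p + 2)))
        + b 1 * ((\<Sum>p<m. c' p ^ (m + p + 2)) - (\<Sum>p<m. c p ^ (m + p + 2))) = z"
      using last unfolding m' by (simp add: z numeral_2_eq_2 del: power_Suc)
    show "(\<Sum>p<m. c' p - c p) = 0"
      using code_power_sum[OF c(1), of 0] code_power_sum[OF c(2), of 0] unfolding m'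
      by (simp add: sum_subtractf)
    show "j < m" "c' j \<noteq> c j" by (fact \<open>j < m\<close>, fact j)
    show "b 0 \<noteq> 0 \<or> b 1 \<noteq> 0" using \<open>\<exists>t<2. b t \<noteq> 0\<close> by (auto simp: less_Suc_eq numeral_2_eq_2)
  next
    fix t assume "\<And>p. p < m \<Longrightarrow> c' p = c p + t * w p" "w j \<noteq> 0"
      "(\<Sum>p<m. (c p + t * w p) ^ (p + 2)) = (\<Sum>p<m. c p ^ (p + 2)) + z * t"
    then show thesis using \<open>j < m\<close> code_eq_shift_vec[OF vecs] by (intro linear) auto
  next
    fix r t assume "r \<in> fraction_params m x w" "\<And>p. p < m \<Longrightarrow> c' p = c p + t * fraction_vec m x w r p"
      "r * (\<Sum>p<m. (c p + t * fraction_vec m x w r p) ^ (p + 2))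
         + (\<Sum>p<m. (c p + t * fraction_vec m x w r p) ^ (m + p + 2))
       = r * (\<Sum>p<m. c p ^ (p + 2)) + (\<Sum>p<m. c p ^ (m + p + 2)) + z * t"
    then show thesis using code_eq_shift_vec[OF vecs] by (intro fraction) auto
  qed
qed

lemma card_meeting_codewords_dim2:
  fixes g :: "'a::{finite,field}"
  assumes n: "4 < n" and q: "2 * n \<le> card (UNIV :: 'a set)" and g: "primitive_element g"
    and c: "c \<in> code n 2 g" and u: "u \<notin> Ssub n 2 g c"
  shows "card {c'\<in>code n 2 g. affine_translate u (Ssub n 2 g c) \<inter> Ssub n 2 g c' \<noteq> {}}
    \<le> 1 + 2 * (n - 2) * (2 * n - 6)"
proof -
  define m where "m = n - 3"
  define x where "x p = g ^ (p + 1)" for p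
  define w where "w p = residual n 2 g c u (2 + p)" for p
  define z where "z = residual n 2 g c u (n - 1)"
  define E where "E = fraction_vec m x w"
  define roots0 where "roots0 = {t. (\<Sum>p<m. (c p + t * w p) ^ (p + 2)) = (\<Sum>p<m. c p ^ (p + 2)) + z * t}"
  define roots where "roots r = {t. r * (\<Sum>p<m. (c p + t * E r p) ^ (p + 2))
      + (\<Sum>p<m. (c p + t * E r p) ^ (m + p + 2))
      = r * (\<Sum>p<m. c p ^ (p + 2)) + (\<Sum>p<m. c p ^ (m + p + 2)) + z * t}" for r
  define A0 where "A0 = (if \<exists>p<m. w p \<noteq> 0 then shift_vec m c w ` roots0 else {})"
  have "m + 1 \<le> card (UNIV :: 'a set) - 1" using n q by (simp add: m_def)
  then have "inj_on (\<lambda>p. g ^ p) {..<m + 1}"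
    using inj_on_subset[OF primitive_element_inj_on_power[OF g]] by auto
  then have inj: "inj_on x {..<m}" unfolding x_def by (rule inj_on_shift_lessThan)
  have "{c'\<in>code n 2 g. affine_translate u (Ssub n 2 g c) \<inter> Ssub n 2 g c' \<noteq> {}}
      \<subseteq> A0 \<union> (\<Union>r\<in>fraction_params m x w. shift_vec m c (E r) ` roots r)"
  proof (rule subsetI, elim CollectE conjE)
    fix c' assume "c' \<in> code n 2 g" "affine_translate u (Ssub n 2 g c) \<inter> Ssub n 2 g c' \<noteq> {}"
    then show "c' \<in> A0 \<union> (\<Union>r\<in>fraction_params m x w. shift_vec m c (E r) ` roots r)"
      by (cases rule: meeting_codeword_dim2[OF n inj c _ u _ m_def x_def w_def z_def])
        (auto simp: A0_def roots0_def roots_def E_def)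
  qed
  then have "card {c'\<in>code n 2 g. affine_translate u (Ssub n 2 g c) \<inter> Ssub n 2 g c' \<noteq> {}}
      \<le> (m + 1) + 2 * m * (2 * m + 1)"
  proof (rule card_le_if_subset_Un_UN)
    show "card A0 \<le> m + 1"
    proof (cases "\<exists>p<m. w p \<noteq> 0")
      case True
      then obtain p0 where "p0 < m" "w p0 \<noteq> 0" by blast
      then have "card roots0 \<le> m + 1" unfolding roots0_def by (rule card_roots_power_sum)
      then show ?thesis using True card_image_le[of roots0 "shift_vec m c w"] by (simp add: A0_def)
    qed (auto simp: A0_def)
    show "card (shift_vec m c (E r) ` roots r) \<le> 2 * m + 1" if r: "r \<in> fraction_params m x w" for r
    proof -
      obtain p0 where "p0 < m" "E r p0 \<noteq> 0" using r by (auto simp: fraction_params_def E_def)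
      then have "card (roots r) \<le> 2 * m + 1" unfolding roots_def by (rule card_roots_two_power_sums)
      then show ?thesis using card_image_le[of "roots r" "shift_vec m c (E r)"] by simp
    qed
  qed (simp_all add: A0_def card_fraction_params[OF inj])
  also have "\<dots> \<le> 1 + 2 * (n - 2) * (2 * n - 6)"
  proof -
    have "n = m + 3" using n by (simp add: m_def)
    then show ?thesis by (simp add: add_mult_distrib add_mult_distrib2)
  qed
  finally show ?thesis .
qed

lemma AAD_Ffam_if_card_meeting_le:
  fixes g :: "'a::{finite,field}"
  assumes nk: "2 * k < n" and q: "n * k \<le> card (UNIV :: 'a set)" and g: "primitive_element g"
    and count: "\<And>c u. c \<in> code n k g \<Longrightarrow> u \<notin> Ssub n k g c \<Longrightarrow>
      card {c'\<in>code n k g. affine_translate u (Ssub n k g c) \<inter> Ssub n k g c' \<noteq> {}} \<le> L"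
  shows "AAD n k L (Ffam n k g)"
  unfolding AAD_def
proof (intro conjI ballI impI)
  show "2 * k < n" by (rule nk)
next
  fix S assume "S \<in> Ffam n k g"
  then show "kdim_subspace n k S" using kdim_subspace_Ssub[OF nk] by (auto simp: Ffam_def)
next
  fix S T assume "S \<in> Ffam n k g" "T \<in> Ffam n k g" "S \<noteq> T"
  then show "S \<inter> T = {zvec}" using Ssub_inter_Ssub[OF nk q g] by (auto simp: Ffam_def)
next
  fix S u assume "S \<in> Ffam n k g" "u \<in> vecs n - S"
  then obtain c where c: "c \<in> code n k g" "S = Ssub n k g c" and u: "u \<notin> Ssub n k g c"
    by (auto simp: Ffam_def)
  let ?C = "{c'\<in>code n k g. affine_translate u (Ssub n k g c) \<inter> Ssub n k g c' \<noteq> {}}"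
  have "{T\<in>Ffam n k g. affine_translate u S \<inter> T \<noteq> {}} = Ssub n k g ` ?C"
    using c(2) by (auto simp: Ffam_def)
  then have "card {T\<in>Ffam n k g. affine_translate u S \<inter> T \<noteq> {}} \<le> card ?C"
    using finite_code[of n k g] by (simp add: card_image_le)
  also have "\<dots> \<le> L" using count[OF c(1) u] .
  finally show "card {T\<in>Ffam n k g. affine_translate u S \<inter> T \<noteq> {}} \<le> L" .
qed

theorem mainTheorem10:
  fixes n k :: nat and g :: "'a::{finite,field}"
  assumes "n > 2 * k"
    and "card (UNIV :: 'a set) \<ge> n * k"
    and "primitive_element g"
  shows "(\<forall>c\<in>code n k g. kdim_subspace n k (Ssub n k g c))
       \<and> (\<forall>c\<in>code n k g. \<forall>c'\<in>code n k g. c \<noteq> c' \<longrightarrow> Ssub n k g c \<inter> Ssub n k g c' = {zvec})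
       \<and> (k = 1 \<longrightarrow> AAD n 1 (n - 1) (Ffam n 1 g))
       \<and> (k = 2 \<longrightarrow> AAD n 2 (1 + 2 * (n - 2) * (2 * n - 6)) (Ffam n 2 g))"
proof (intro conjI ballI impI)
  show "kdim_subspace n k (Ssub n k g c)" for c by (rule kdim_subspace_Ssub[OF assms(1)])
  show "Ssub n k g c \<inter> Ssub n k g c' = {zvec}"
    if "c \<in> code n k g" "c' \<in> code n k g" "c \<noteq> c'" for c c'
    using Ssub_inter_Ssub[OF assms that] .
  show "AAD n 1 (n - 1) (Ffam n 1 g)" if "k = 1"
    using assms that
    by (intro AAD_Ffam_if_card_meeting_le card_meeting_codewords_dim1) auto
  show "AAD n 2 (1 + 2 * (n - 2) * (2 * n - 6)) (Ffam n 2 g)" if "k = 2"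
    using assms that
    by (intro AAD_Ffam_if_card_meeting_le card_meeting_codewords_dim2) (auto simp: mult.commute)
qed

end
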